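(* Let $G$ be an $n$-node graph with arboricity $\lambda$ and maximum degree $\Delta\ge(2\lambda)^{20}$, and let $d=\Delta^{1/10}$. Let $G_0'$ be any subgraph of $G$ induced by a set of vertices (the graph at the start of a phase), and define $G_1$ as the graph obtained from $G_0'$ by removing all vertices in the $60$ lowest-index layers of the greedy-peeling $H$-partition with out-degree $d$, and for $i\ge1$ let $G_{i+1}$ be obtained from $G_i$ by removing all vertices in the $20\cdot 2^i$ lowest-index layers of the greedy-peeling $H$-partition of $G_i$ with out-degree $d$. Then for all $i\ge1$, $G_i$ contains at most $n'/\Delta^{2^i}$ nodes, where $n'=n/\Delta$.
   Context: The arboricity of a graph is the minimum number of forests into which its edges can be partitioned. An $H$-partition with out-degree $d$ is a partition of the vertices into layers $L_1,\dots,L_\ell$ such that every $v\in L_i$ has at most $d$ neighbors in $\bigcup_{j\ge i}L_j$; the greedy peeling algorithm constructs it by repeatedly, for $i=1,2,\dots$, putting all remaining vertices of remaining degree at most $d$ into $L_i$ and removing them. Layers of a graph are with respect to its own (original) edges; removing the lowest layers of the $H$-partition of a graph leaves a graph whose $H$-partition consists of the remaining layers in order. *)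

theory Defs
  imports Complex_Main
begin

definition simple_graph :: "'a set \<Rightarrow> 'a set set \<Rightarrow> bool" where
  "simple_graph V E \<longleftrightarrow> finite V \<and> (\<forall>e\<in>E. e \<subseteq> V \<and> card e = 2)"

definition degree :: "'a set \<Rightarrow> 'a set set \<Rightarrow> 'a \<Rightarrow> nat" where
  "degree V E v = card {u\<in>V. {u, v} \<in> E}"

definition max_degree :: "'a set \<Rightarrow> 'a set set \<Rightarrow> nat" where
  "max_degree V E = Max (degree V E ` V)"

definition is_cycle :: "'a set set \<Rightarrow> 'a list \<Rightarrow> bool" where
  "is_cycle F vs \<longleftrightarrow> length vs \<ge> 3 \<and> distinct vs \<and>
     (\<forall>i < length vs. {vs ! i, vs ! ((i + 1) mod length vs)} \<in> F)"

definition is_forest :: "'a set set \<Rightarrow> bool" where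
  "is_forest F \<longleftrightarrow> \<not> (\<exists>vs. is_cycle F vs)"

text \<open>Arboricity: least k such that the edges can be partitioned into k forests
  (classes given by a labelling of edges with labels < k; empty classes allowed).\<close>
definition arboricity :: "'a set set \<Rightarrow> nat" where
  "arboricity E = (LEAST k. \<exists>f. (\<forall>e\<in>E. f e < k) \<and>
       (\<forall>j<k. is_forest {e\<in>E. f e = j}))"

text \<open>One step of greedy peeling with out-degree d on the subgraph of (V,E) induced by R:
  the current layer is the set of vertices of R with at most d neighbours in R; it is removed.\<close>
definition peel_layer :: "'a set set \<Rightarrow> real \<Rightarrow> 'a set \<Rightarrow> 'a set" where
  "peel_layer E d R = {v\<in>R. real (card {u\<in>R. {u, v} \<in> E}) \<le> d}"

definition peel_step :: "'a set set \<Rightarrow> real \<Rightarrow> 'a set \<Rightarrow> 'a set" where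
  "peel_step E d R = R - peel_layer E d R"

definition remove_layers :: "'a set set \<Rightarrow> real \<Rightarrow> nat \<Rightarrow> 'a set \<Rightarrow> 'a set" where
  "remove_layers E d k R = (peel_step E d ^^ k) R"

fun phase_graph :: "'a set set \<Rightarrow> real \<Rightarrow> 'a set \<Rightarrow> nat \<Rightarrow> 'a set" where
  "phase_graph E d W 0 = W"
| "phase_graph E d W (Suc 0) = remove_layers E d 60 W"
| "phase_graph E d W (Suc (Suc i)) =
     remove_layers E d (20 * 2 ^ Suc i) (phase_graph E d W (Suc i))"

end

theory Submission
  imports Defs
begin

text \<open>Every vertex that survives a peeling step has more than d neighbours among the current
  vertices R, while the subgraph induced by R has at most \<lambda>|R| edges, because each of the \<lambda>
  forests of an optimal decomposition has fewer than |R| edges there. Double counting the degrees,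
  one step keeps at most (2\<lambda>/d)|R| vertices. With d = \<Delta>^(1/10) and 2\<lambda> \<le> \<Delta>^(1/20) this ratio is
  at most \<Delta>^(-1/20), so removing 60 layers shrinks the vertex set by \<Delta>^3 = \<Delta> \<Delta>^2, and removing
  20 2^i layers shrinks it by \<Delta>^(2^i), which turns the bound \<Delta> \<Delta>^(2^i) into \<Delta> \<Delta>^(2^(i+1)).\<close>

lemma is_forest_subset: "is_forest F \<Longrightarrow> G \<subseteq> F \<Longrightarrow> is_forest G"
  unfolding is_forest_def is_cycle_def by blast

lemma is_forest_if_card_le_1:
  assumes "finite F" "card F \<le> 1"
  shows "is_forest F"
  unfolding is_forest_def
proof
  assume "\<exists>vs. is_cycle F vs"
  then obtain vs where vs: "is_cycle F vs" by blast
  then have len: "3 \<le> length vs" and "distinct vs" unfolding is_cycle_def by auto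
  then have "vs ! 0 \<notin> {vs ! 1, vs ! 2}" by (force simp: distinct_conv_nth)
  then have distinct_edges: "{vs ! 0, vs ! 1} \<noteq> {vs ! 1, vs ! 2}" by auto
  have edge: "{vs ! i, vs ! ((i + 1) mod length vs)} \<in> F" if "i < length vs" for i
    using vs that unfolding is_cycle_def by blast
  have "{vs ! 0, vs ! 1} \<in> F" "{vs ! 1, vs ! 2} \<in> F"
    using edge[of 0] edge[of 1] len by (auto simp: numeral_2_eq_2 simp del: length_greater_0_conv)
  then have "card {{vs ! 0, vs ! 1}, {vs ! 1, vs ! 2}} \<le> card F"
    using assms(1) by (intro card_mono) auto
  with distinct_edges assms(2) show False by simp
qed

definition is_path :: "'a set set \<Rightarrow> 'a list \<Rightarrow> bool" where
  "is_path F vs \<longleftrightarrow> distinct vs \<and> (\<forall>i. Suc i < length vs \<longrightarrow> {vs ! i, vs ! Suc i} \<in> F)"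

lemma is_path_snoc:
  assumes "is_path F vs" "vs \<noteq> []" "u \<notin> set vs" "{last vs, u} \<in> F"
  shows "is_path F (vs @ [u])"
  unfolding is_path_def
proof (intro conjI allI impI)
  show "distinct (vs @ [u])" using assms(1,3) unfolding is_path_def by simp
  fix i assume "Suc i < length (vs @ [u])"
  then consider "Suc i < length vs" | "Suc i = length vs" by fastforce
  then show "{(vs @ [u]) ! i, (vs @ [u]) ! Suc i} \<in> F"
  proof cases
    case 1 then show ?thesis using assms(1) unfolding is_path_def by (simp add: nth_append)
  next
    case 2
    then have "i = length vs - 1" by simp
    then show ?thesis using 2 assms(2,4) by (simp add: nth_append last_conv_nth)
  qed
qed

lemma is_cycle_drop:
  assumes "is_path F vs" "j + 3 \<le> length vs" "{vs ! j, last vs} \<in> F"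
  shows "is_cycle F (drop j vs)"
  unfolding is_cycle_def
proof (intro conjI allI impI)
  show "3 \<le> length (drop j vs)" "distinct (drop j vs)"
    using assms(1,2) unfolding is_path_def by auto
  fix i assume i: "i < length (drop j vs)"
  show "{drop j vs ! i, drop j vs ! ((i + 1) mod length (drop j vs))} \<in> F"
  proof (cases "Suc i < length (drop j vs)")
    case True then show ?thesis using assms(1) unfolding is_path_def by simp
  next
    case False
    then have "Suc i = length vs - j" using i by simp
    then have "j + i = length vs - 1" "(i + 1) mod length (drop j vs) = 0" by simp_all
    moreover have "vs \<noteq> []" using assms(2) by auto
    ultimately show ?thesis using assms(3) by (simp add: last_conv_nth insert_commute)
  qed
qed

lemma ex_cycle_if_min_degree_2:
  assumes "finite R" "R \<noteq> {}" "\<forall>e\<in>F. e \<subseteq> R \<and> card e = 2"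
    and "\<forall>v\<in>R. 2 \<le> card {u. {u, v} \<in> F}"
  shows "\<exists>vs. is_cycle F vs"
proof -
  define P where "P vs \<longleftrightarrow> is_path F vs \<and> vs \<noteq> [] \<and> set vs \<subseteq> R" for vs
  obtain r where "r \<in> R" using assms(2) by blast
  then have "P [r]" unfolding P_def is_path_def by simp
  moreover have "\<forall>vs. P vs \<longrightarrow> length vs < Suc (card R)"
    unfolding P_def is_path_def by (metis assms(1) card_mono distinct_card less_Suc_eq_le)
  ultimately obtain vs where vs: "P vs" and longest: "\<And>ws. P ws \<Longrightarrow> length ws \<le> length vs"
    using ex_has_greatest_nat[of P "[r]" length] by metis
  txt \<open>The end v of a longest path has a neighbour u other than its predecessor; by
    maximality u lies on the path, which closes a cycle. (If the path is a single vertex,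
    the index length vs - 2 truncates to 0, i.e. to v itself.)\<close>
  define v where "v = last vs"
  have "v \<in> R" using vs unfolding P_def v_def by auto
  have "\<not> {u. {u, v} \<in> F} \<subseteq> {vs ! (length vs - 2)}"
  proof
    assume "{u. {u, v} \<in> F} \<subseteq> {vs ! (length vs - 2)}"
    then have "card {u. {u, v} \<in> F} \<le> 1" using card_mono[of "{_}"] by fastforce
    with \<open>v \<in> R\<close> assms(4) show False by fastforce
  qed
  then obtain u where u: "{u, v} \<in> F" "u \<noteq> vs ! (length vs - 2)" by blast
  have "u \<noteq> v" using u(1) assms(3) by fastforce
  have "u \<in> set vs"
  proof (rule ccontr)
    assume "u \<notin> set vs"
    then have "P (vs @ [u])"
      using vs u(1) assms(3) is_path_snoc[of F vs u] unfolding P_def v_def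
      by (auto simp: insert_commute)
    then show False using longest[of "vs @ [u]"] by simp
  qed
  then obtain j where j: "j < length vs" "vs ! j = u" by (metis in_set_conv_nth)
  have "j \<noteq> length vs - 1" using j \<open>u \<noteq> v\<close> vs unfolding v_def P_def by (auto simp: last_conv_nth)
  moreover have "j \<noteq> length vs - 2" using j u(2) by auto
  ultimately have "j + 3 \<le> length vs" using j by linarith
  moreover have "{vs ! j, last vs} \<in> F" using j u(1) unfolding v_def by simp
  ultimately show ?thesis using vs is_cycle_drop unfolding P_def by blast
qed

lemma card_neighbours_eq_card_incident:
  assumes "\<forall>e\<in>F. card e = 2"
  shows "card {u. {u, v} \<in> F} = card {e\<in>F. v \<in> e}"
proof (rule bij_betw_same_card)
  have "{v} \<notin> F" using assms by fastforce
  then have "inj_on (\<lambda>u. {u, v}) {u. {u, v} \<in> F}"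
    unfolding inj_on_def by (metis doubleton_eq_iff insert_absorb2 mem_Collect_eq)
  moreover have "(\<lambda>u. {u, v}) ` {u. {u, v} \<in> F} = {e\<in>F. v \<in> e}"
  proof (intro equalityI subsetI)
    fix e assume e: "e \<in> {e\<in>F. v \<in> e}"
    then obtain x y where "e = {x, y}" using assms card_2_iff by (metis mem_Collect_eq)
    with e have "e = {if x = v then y else x, v}" by auto
    with e show "e \<in> (\<lambda>u. {u, v}) ` {u. {u, v} \<in> F}" by (intro image_eqI) auto
  qed auto
  ultimately show "bij_betw (\<lambda>u. {u, v}) {u. {u, v} \<in> F} {e\<in>F. v \<in> e}"
    by (simp add: bij_betw_def)
qed

lemma card_forest_le:
  assumes "finite R" "\<forall>e\<in>F. e \<subseteq> R \<and> card e = 2" "is_forest F"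
  shows "card F \<le> card R"
  using assms
proof (induction R arbitrary: F rule: finite_psubset_induct)
  case (psubset R)
  show ?case
  proof (cases "R = {}")
    case True
    then have "F = {}"
      using psubset.prems(1) by (metis card.empty subset_empty zero_neq_numeral equals0I)
    then show ?thesis by simp
  next
    case False
    have "\<not> (\<forall>v\<in>R. 2 \<le> card {u. {u, v} \<in> F})"
      using ex_cycle_if_min_degree_2[OF psubset.hyps(1) False psubset.prems(1)] psubset.prems(2)
      unfolding is_forest_def by blast
    then obtain v where v: "v \<in> R" "card {u. {u, v} \<in> F} \<le> 1" by (auto simp: not_le)
    have "finite F"
      using psubset.hyps(1) psubset.prems(1) by (meson Pow_iff finite_Pow_iff finite_subset subsetI)
    then have "card F = card (F \<inter> {e. v \<notin> e}) + card (F - {e. v \<notin> e})"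
      by (rule card_Int_Diff)
    also have "F \<inter> {e. v \<notin> e} = {e\<in>F. v \<notin> e}" by blast
    also have "F - {e. v \<notin> e} = {e\<in>F. v \<in> e}" by blast
    also have "card {e\<in>F. v \<notin> e} \<le> card (R - {v})"
    proof (rule psubset.IH)
      show "R - {v} \<subset> R" using v(1) by blast
      show "\<forall>e\<in>{e\<in>F. v \<notin> e}. e \<subseteq> R - {v} \<and> card e = 2" using psubset.prems(1) by blast
      show "is_forest {e\<in>F. v \<notin> e}" using psubset.prems(2) by (rule is_forest_subset) blast
    qed
    also have "card {e\<in>F. v \<in> e} \<le> 1"
      using v(2) card_neighbours_eq_card_incident[of F v] psubset.prems(1) by simp
    finally have "card F \<le> card (R - {v}) + 1" by simp
    moreover have "0 < card R" using v(1) psubset.hyps(1) card_gt_0_iff by blast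
    ultimately show ?thesis using v(1) psubset.hyps(1) by (simp add: card_Diff_singleton)
  qed
qed

lemma arboricity_forest_labelling:
  assumes "simple_graph V E"
  shows "\<exists>f. (\<forall>e\<in>E. f e < arboricity E) \<and> (\<forall>j<arboricity E. is_forest {e\<in>E. f e = j})"
proof -
  have "finite E"
    using assms unfolding simple_graph_def by (meson Pow_iff finite_Pow_iff finite_subset subsetI)
  then obtain f and k :: nat where f: "f ` E = {i. i < k}" "inj_on f E"
    using finite_imp_inj_to_nat_seg by blast
  have "is_forest {e\<in>E. f e = j}" for j
  proof (rule is_forest_if_card_le_1)
    show "finite {e\<in>E. f e = j}" using \<open>finite E\<close> by simp
    have "inj_on f {e\<in>E. f e = j}" using f(2) by (rule inj_on_subset) blast
    then have "card {e\<in>E. f e = j} \<le> card {j}" by (rule card_inj_on_le) auto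
    then show "card {e\<in>E. f e = j} \<le> 1" by simp
  qed
  moreover have "\<forall>e\<in>E. f e < k" using f(1) by (metis imageI mem_Collect_eq)
  ultimately have "\<exists>k::nat. \<exists>f. (\<forall>e\<in>E. f e < k) \<and> (\<forall>j<k. is_forest {e\<in>E. f e = j})"
    by blast
  from LeastI_ex[OF this] show ?thesis unfolding arboricity_def .
qed

lemma arboricity_eq_0_imp_no_edges:
  assumes "simple_graph V E" "arboricity E = 0"
  shows "E = {}"
proof -
  obtain f :: "'a set \<Rightarrow> nat" where "\<forall>e\<in>E. f e < arboricity E"
    using arboricity_forest_labelling[OF assms(1)] by blast
  with assms(2) show ?thesis by auto
qed

lemma card_induced_edges_le:
  assumes "simple_graph V E" "finite R"
  shows "card {e\<in>E. e \<subseteq> R} \<le> arboricity E * card R"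
proof -
  obtain f :: "'a set \<Rightarrow> nat"
    where f: "\<forall>e\<in>E. f e < arboricity E" "\<forall>j<arboricity E. is_forest {e\<in>E. f e = j}"
    using arboricity_forest_labelling[OF assms(1)] by blast
  have "{e\<in>E. e \<subseteq> R} = (\<Union>j<arboricity E. {e\<in>E. e \<subseteq> R \<and> f e = j})"
    using f(1) by auto
  then have "card {e\<in>E. e \<subseteq> R} \<le> (\<Sum>j<arboricity E. card {e\<in>E. e \<subseteq> R \<and> f e = j})"
    by (simp add: card_UN_le)
  also have "\<dots> \<le> (\<Sum>j<arboricity E. card R)"
  proof (rule sum_mono, rule card_forest_le[OF assms(2)])
    fix j assume "j \<in> {..<arboricity E}"
    then have "is_forest {e\<in>E. f e = j}" using f(2) by simp
    then show "is_forest {e\<in>E. e \<subseteq> R \<and> f e = j}" by (rule is_forest_subset) blast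
    show "\<forall>e\<in>{e\<in>E. e \<subseteq> R \<and> f e = j}. e \<subseteq> R \<and> card e = 2"
      using assms(1) unfolding simple_graph_def by blast
  qed
  finally show ?thesis by simp
qed

lemma sum_card_incident:
  assumes "finite R" "finite F" "\<forall>e\<in>F. e \<subseteq> R \<and> card e = 2"
  shows "(\<Sum>v\<in>R. card {e\<in>F. v \<in> e}) = 2 * card F"
proof -
  have "(\<Sum>v\<in>R. card {e\<in>F. v \<in> e}) = (\<Sum>v\<in>R. \<Sum>e\<in>{e\<in>F. v \<in> e}. 1)" by simp
  also have "\<dots> = (\<Sum>e\<in>F. \<Sum>v\<in>{v\<in>R. v \<in> e}. 1)" by (rule sum.swap_restrict[OF assms(1,2)])
  also have "\<dots> = (\<Sum>e\<in>F. 2)"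
  proof (rule sum.cong)
    fix e assume "e \<in> F"
    then have "{v\<in>R. v \<in> e} = e" "card e = 2" using assms(3) by auto
    then show "(\<Sum>v\<in>{v\<in>R. v \<in> e}. 1) = (2::nat)" by simp
  qed simp
  finally show ?thesis by simp
qed

lemma sum_degree_induced:
  assumes "\<forall>e\<in>E. card e = 2" "finite R"
  shows "(\<Sum>v\<in>R. card {u\<in>R. {u, v} \<in> E}) = 2 * card {e\<in>E. e \<subseteq> R}"
proof -
  let ?F = "{e\<in>E. e \<subseteq> R}"
  have F: "\<forall>e\<in>?F. e \<subseteq> R \<and> card e = 2" using assms(1) by simp
  then have "\<forall>e\<in>?F. card e = 2" by blast
  have "finite ?F" by (rule finite_subset[of _ "Pow R"]) (use assms(2) in auto)
  have "card {u\<in>R. {u, v} \<in> E} = card {e\<in>?F. v \<in> e}" if "v \<in> R" for v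
  proof -
    have "{u\<in>R. {u, v} \<in> E} = {u. {u, v} \<in> ?F}" using that by auto
    with card_neighbours_eq_card_incident[OF \<open>\<forall>e\<in>?F. card e = 2\<close>] show ?thesis by simp
  qed
  then have "(\<Sum>v\<in>R. card {u\<in>R. {u, v} \<in> E}) = (\<Sum>v\<in>R. card {e\<in>?F. v \<in> e})"
    by (rule sum.cong[OF refl])
  also have "\<dots> = 2 * card ?F" using sum_card_incident[OF assms(2) \<open>finite ?F\<close> F] .
  finally show ?thesis .
qed

lemma card_peel_step_le:
  assumes "simple_graph V E" "finite R"
  shows "d * real (card (peel_step E d R)) \<le> 2 * real (arboricity E) * real (card R)"
proof -
  define deg where "deg v = real (card {u\<in>R. {u, v} \<in> E})" for v
  have S: "peel_step E d R = {v\<in>R. d < deg v}"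
    unfolding peel_step_def peel_layer_def deg_def by auto
  have "\<forall>e\<in>E. card e = 2" using assms(1) unfolding simple_graph_def by blast
  have "d * real (card (peel_step E d R)) = (\<Sum>v\<in>peel_step E d R. d)" by simp
  also have "\<dots> \<le> (\<Sum>v\<in>peel_step E d R. deg v)" unfolding S by (rule sum_mono) simp
  also have "\<dots> \<le> (\<Sum>v\<in>R. deg v)"
    unfolding S using assms(2) by (intro sum_mono2) (auto simp: deg_def)
  also have "\<dots> = real (\<Sum>v\<in>R. card {u\<in>R. {u, v} \<in> E})" unfolding deg_def by simp
  also have "\<dots> = 2 * real (card {e\<in>E. e \<subseteq> R})"
    using sum_degree_induced[OF \<open>\<forall>e\<in>E. card e = 2\<close> assms(2)] by simp
  also have "\<dots> \<le> 2 * real (arboricity E * card R)"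
    using of_nat_mono[OF card_induced_edges_le[OF assms]] by simp
  finally show ?thesis by simp
qed

lemma peel_step_subset: "peel_step E d R \<subseteq> R"
  unfolding peel_step_def by blast

lemma remove_layers_Suc: "remove_layers E d (Suc k) R = peel_step E d (remove_layers E d k R)"
  unfolding remove_layers_def by simp

lemma remove_layers_subset: "remove_layers E d k R \<subseteq> R"
proof (induction k)
  case 0
  then show ?case by (simp add: remove_layers_def)
next
  case (Suc k)
  show ?case
    unfolding remove_layers_Suc using peel_step_subset Suc.IH by (rule subset_trans)
qed

lemma phase_graph_subset: "phase_graph E d W i \<subseteq> W"
proof (induction E d W i rule: phase_graph.induct)
  case (3 E d W i)
  have "phase_graph E d W (Suc (Suc i)) \<subseteq> phase_graph E d W (Suc i)"
    by (simp add: remove_layers_subset)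
  then show ?case using 3 by (rule subset_trans)
qed (simp_all add: remove_layers_subset)

lemma phase_graph_no_edges:
  assumes "0 \<le> d"
  shows "phase_graph {} d W (Suc i) = {}"
proof -
  have "peel_step {} d R = {}" for R :: "'a set"
    using assms unfolding peel_step_def peel_layer_def by auto
  then have "remove_layers {} d k R = {}" if "0 < k" for k and R :: "'a set"
    using that by (cases k) (simp_all add: remove_layers_Suc)
  then show ?thesis by (cases i) simp_all
qed

lemma card_remove_layers_le:
  assumes "simple_graph V E" "finite R" "0 < d"
  shows "real (card (remove_layers E d k R)) \<le> (2 * real (arboricity E) / d) ^ k * real (card R)"
proof (induction k)
  case 0
  then show ?case by (simp add: remove_layers_def)
next
  case (Suc k)
  let ?q = "2 * real (arboricity E) / d" and ?R = "remove_layers E d k R"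
  have "finite ?R" using finite_subset[OF remove_layers_subset assms(2)] .
  with assms(1) have "d * real (card (peel_step E d ?R)) \<le> 2 * real (arboricity E) * real (card ?R)"
    by (rule card_peel_step_le)
  then have "real (card (peel_step E d ?R)) \<le> ?q * real (card ?R)"
    using assms(3) by (simp add: field_simps)
  also have "\<dots> \<le> ?q * (?q ^ k * real (card R))"
    by (rule mult_left_mono[OF Suc]) (use assms(3) in simp)
  finally show ?case by (simp add: remove_layers_Suc)
qed

lemma card_phase_graph_le:
  assumes "simple_graph V E" "finite W" "0 < d"
  shows "real (card (phase_graph E d W (Suc i)))
    \<le> (2 * real (arboricity E) / d) ^ (20 * 2 ^ Suc i + 20) * real (card W)"
proof (induction i)
  txt \<open>The exponent is 60 + 40 + 80 + ... + 20 2^(i+1) = 20 2^(i+1) + 20.\<close>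
  case 0
  have "20 * 2 ^ Suc 0 + 20 = (60::nat)" by simp
  then show ?case using card_remove_layers_le[OF assms, of 60] by (simp only: phase_graph.simps)
next
  case (Suc i)
  let ?q = "2 * real (arboricity E) / d" and ?G = "phase_graph E d W (Suc i)"
  have "finite ?G" using finite_subset[OF phase_graph_subset assms(2)] .
  then have "real (card (phase_graph E d W (Suc (Suc i)))) \<le> ?q ^ (20 * 2 ^ Suc i) * real (card ?G)"
    using card_remove_layers_le[OF assms(1) _ assms(3)] by simp
  also have "\<dots> \<le> ?q ^ (20 * 2 ^ Suc i) * (?q ^ (20 * 2 ^ Suc i + 20) * real (card W))"
    by (rule mult_left_mono[OF Suc]) (use assms(3) in simp)
  also have "\<dots> = ?q ^ (20 * 2 ^ Suc (Suc i) + 20) * real (card W)"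
  proof -
    have "20 * 2 ^ Suc (Suc i) + 20 = 20 * 2 ^ Suc i + (20 * 2 ^ Suc i + 20 :: nat)" by simp
    then show ?thesis by (simp only: power_add mult.assoc)
  qed
  finally show ?case .
qed

lemma ratio_power_le:
  fixes c D :: real
  assumes "0 \<le> c" "c ^ 20 \<le> D" "0 < D"
  shows "(c / D powr (1/10)) ^ (20 * 2 ^ i + 20) \<le> 1 / (D * D ^ 2 ^ i)"
proof -
  define a where "a = D powr (1/20)"
  have "0 < a" unfolding a_def using assms(3) by simp
  have a_pow: "a ^ n = D powr (n / 20)" for n :: nat
    unfolding a_def using assms(3) by (simp add: powr_realpow[symmetric] powr_powr)
  have "D powr (1/10) = a ^ 2" by (simp add: a_pow)
  have "a ^ 20 = D" using assms(3) by (simp add: a_pow)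
  then have "c ^ 20 \<le> a ^ 20" using assms(2) by simp
  then have "c \<le> a" using assms(1) \<open>0 < a\<close> by simp
  then have "c / a ^ 2 \<le> 1 / a" using \<open>0 < a\<close> by (simp add: field_simps power2_eq_square)
  then have "(c / a ^ 2) ^ (20 * 2 ^ i + 20) \<le> (1 / a) ^ (20 * 2 ^ i + 20)"
    using assms(1) by (intro power_mono) auto
  also have "\<dots> = 1 / ((a ^ 20) ^ 2 ^ i * a ^ 20)"
    by (simp add: power_add power_mult power_one_over)
  finally show ?thesis using \<open>D powr (1/10) = a ^ 2\<close> \<open>a ^ 20 = D\<close> by (simp add: mult.commute)
qed

theorem lemma5:
  fixes V :: "'a set" and E :: "'a set set" and W :: "'a set" and i :: nat
  assumes "simple_graph V E"
    and "real (max_degree V E) \<ge> (2 * real (arboricity E)) ^ 20"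
    and "W \<subseteq> V"
    and "i \<ge> 1"
  shows "real (card (phase_graph E (real (max_degree V E) powr (1/10)) W i))
           \<le> (real (card V) / real (max_degree V E)) / real (max_degree V E) ^ (2 ^ i)"
proof -
  define D where "D = real (max_degree V E)"
  have "finite V" using assms(1) unfolding simple_graph_def by blast
  then have "finite W" "card W \<le> card V"
    using finite_subset[OF assms(3)] card_mono[OF _ assms(3)] by simp_all
  obtain m where i: "i = Suc m" using assms(4) by (cases i) auto
  show ?thesis
  proof (cases "arboricity E = 0")
    case True
    then have "E = {}" by (rule arboricity_eq_0_imp_no_edges[OF assms(1)])
    then show ?thesis unfolding i by (simp add: phase_graph_no_edges)
  next
    case False
    then have "1 \<le> (2 * real (arboricity E)) ^ 20" by (intro one_le_power) simp
    with assms(2) have "0 < D" unfolding D_def by linarith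
    then have "real (card (phase_graph E (D powr (1/10)) W i))
        \<le> (2 * real (arboricity E) / D powr (1/10)) ^ (20 * 2 ^ i + 20) * real (card W)"
      unfolding i using card_phase_graph_le[OF assms(1) \<open>finite W\<close>] by simp
    also have "\<dots> \<le> 1 / (D * D ^ 2 ^ i) * real (card V)"
      using ratio_power_le[OF _ assms(2)[folded D_def] \<open>0 < D\<close>] \<open>card W \<le> card V\<close> \<open>0 < D\<close>
      by (intro mult_mono) auto
    finally show ?thesis unfolding D_def by simp
  qed
qed

end
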